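(* Let $n \geq 2$ and $1 \le k \le n$ with $k \geq \frac{n}{2}$, and write points of $\mathbb{R}^n$ as $(x,y)$ with $x \in \mathbb{R}^{n-k}$, $y \in \mathbb{R}^k$. Let $u$ be a convex function on the unit ball $B_1 \subset \mathbb{R}^n$ with $\det D^2 u \leq \Lambda < \infty$ in $B_1$ in the Alexandrov sense. If $u(0) = 0$ and $u(x,y) \geq |y|$ in $B_1$, then the set $\{u = 0\}$ has no extremal points in $\{y = 0\} \cap B_1$.
   Context: For a convex function $v$ on a domain $U$, its Monge–Ampère measure $Mv$ is given by $Mv(E) = |\partial v(E)|$ for Borel $E\subset U$ ($\partial v$ the subgradient, $|\cdot|$ Lebesgue measure); "$\det D^2 v \le \Lambda$ in the Alexandrov sense" means $Mv \le \Lambda\,dx$. An extremal point of a convex set is a point that is not in the interior of any segment contained in the set. *)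

theory Defs
  imports "HOL-Analysis.Analysis"
begin

definition subgradient :: "('a::euclidean_space \<Rightarrow> real) \<Rightarrow> 'a set \<Rightarrow> 'a \<Rightarrow> 'a set" where
  "subgradient u U z = {p. \<forall>w\<in>U. u w \<ge> u z + p \<bullet> (w - z)}"

text \<open>det D^2 u \<le> Lambda in the Alexandrov sense on U: for every Borel E \<subseteq> U the
  (outer) Lebesgue measure of the subgradient image is at most Lambda |E|.\<close>
definition MA_le :: "('a::euclidean_space \<Rightarrow> real) \<Rightarrow> 'a set \<Rightarrow> real \<Rightarrow> bool" where
  "MA_le u U \<Lambda> \<longleftrightarrow> (\<forall>E. E \<in> sets borel \<and> E \<subseteq> U \<longrightarrow>
     (\<exists>T \<in> sets lebesgue. (\<Union>z\<in>E. subgradient u U z) \<subseteq> T \<and>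
        emeasure lebesgue T \<le> ennreal \<Lambda> * emeasure lebesgue E))"

definition ypart :: "'n set \<Rightarrow> real ^ 'n \<Rightarrow> real ^ 'n" where
  "ypart K z = (\<chi> i. if i \<in> K then z $ i else 0)"

end

theory Submission
  imports Defs
begin

(* Suppose z0 is an extreme point of Z = {u = 0}.  Since Z - {z0} is convex, a hyperplane cuts off
   an arbitrarily small cap of Z at z0, and tilting u by a small multiple of the corresponding
   affine function l gives a section S = {u <= l} of some height h > 0 that lies in B_eps(z0),
   touches Z and satisfies u <= 2h.  As u >= |y|, S lies in a box with k sides of length
   O(min(eps, h)) and n - k sides of length O(eps), so |S|^2 <= C (eps h)^n because 2k >= n.
   Slopes within O(h / side length) of the gradient of l are subgradients at points of S, so
   |S| |du(S)| >= c h^n, and det D^2 u <= Lambda gives h^n <= C Lambda (eps h)^n, i.e.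
   1 <= C Lambda eps^n, which fails for small eps. *)

definition affine_sublevel :: "('a::real_inner \<Rightarrow> real) \<Rightarrow> 'a set \<Rightarrow> 'a \<Rightarrow> real \<Rightarrow> 'a set" where
  "affine_sublevel u B b k = {w \<in> B. u w \<le> b \<bullet> w + k}"

lemma convex_on_minus_inner:
  assumes "convex_on S f"
  shows "convex_on S (\<lambda>x. f x - p \<bullet> x)"
  using assms unfolding convex_on_def by (auto simp: inner_add_right algebra_simps)

lemma convex_affine_sublevel:
  assumes "convex_on B u"
  shows "convex (affine_sublevel u B b k)"
proof (rule convexI)
  fix x y and s t :: real
  assume x: "x \<in> affine_sublevel u B b k" and y: "y \<in> affine_sublevel u B b k"
    and st: "0 \<le> s" "0 \<le> t" "s + t = 1"
  have "u (s *\<^sub>R x + t *\<^sub>R y) \<le> s * u x + t * u y"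
    using assms x y st unfolding affine_sublevel_def convex_on_def by auto
  also have "\<dots> \<le> s * (b \<bullet> x + k) + t * (b \<bullet> y + k)"
    using x y st by (intro add_mono mult_left_mono) (auto simp: affine_sublevel_def)
  also have "\<dots> = b \<bullet> (s *\<^sub>R x + t *\<^sub>R y) + k"
    using st(3) by (simp add: algebra_simps) (metis distrib_left mult.right_neutral)
  finally show "s *\<^sub>R x + t *\<^sub>R y \<in> affine_sublevel u B b k"
    using convexD[OF convex_on_imp_convex[OF assms]] x y st by (auto simp: affine_sublevel_def)
qed

lemma convex_zero_set:
  fixes u :: "'a::real_inner \<Rightarrow> real"
  assumes "convex_on B u" "\<And>z. z \<in> B \<Longrightarrow> 0 \<le> u z"
  shows "convex {z \<in> B. u z = 0}"
proof -
  have "{z \<in> B. u z = 0} = affine_sublevel u B 0 0"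
    using assms(2) by (force simp: affine_sublevel_def)
  then show ?thesis using convex_affine_sublevel[OF assms(1)] by simp
qed

lemma compact_affine_sublevel:
  fixes u :: "'a::euclidean_space \<Rightarrow> real"
  assumes "continuous_on B u" "cball z r \<subseteq> B" "affine_sublevel u B b k \<subseteq> cball z r"
  shows "compact (affine_sublevel u B b k)"
proof -
  have "affine_sublevel u B b k = cball z r \<inter> affine_sublevel u B b k"
    using assms(3) by blast
  also have "\<dots> = cball z r \<inter> (\<lambda>w. u w - b \<bullet> w) -` {..k}"
    using assms(2) unfolding affine_sublevel_def by (force simp: algebra_simps)
  finally have eq: "affine_sublevel u B b k = cball z r \<inter> (\<lambda>w. u w - b \<bullet> w) -` {..k}" .
  have "continuous_on (cball z r) (\<lambda>w. u w - b \<bullet> w)"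
    using continuous_on_subset[OF assms(1,2)] by (intro continuous_intros)
  then have "closed (affine_sublevel u B b k)"
    unfolding eq by (intro continuous_closed_preimage) auto
  then show ?thesis
    unfolding eq by (meson bounded_Int bounded_cball compact_eq_bounded_closed)
qed

lemma convex_contains_point_at_distance:
  fixes S :: "'a::real_normed_vector set"
  assumes "convex S" "x \<in> S" "y \<in> S" "0 \<le> r" "r \<le> dist x y"
  obtains z where "z \<in> S" "dist x z = r"
proof -
  define t where "t = r / dist x y"
  have t: "0 \<le> t" "t \<le> 1" "t * dist x y = r"
    using assms(4,5) by (auto simp: t_def divide_simps)
  have "x - ((1 - t) *\<^sub>R x + t *\<^sub>R y) = t *\<^sub>R (x - y)"
    by (simp add: algebra_simps)
  then have "dist x ((1 - t) *\<^sub>R x + t *\<^sub>R y) = r"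
    using t by (simp add: dist_norm)
  then show thesis
    using that convexD_alt[OF assms(1-3) t(1,2)] by blast
qed

text \<open>Separate \<open>z0\<close> from \<open>convex hull (Z \<inter> sphere z0 \<epsilon>)\<close>, which avoids \<open>z0\<close> because
  \<open>Z - {z0}\<close> is convex.\<close>
lemma extreme_point_cut_off:
  fixes Z :: "'a::euclidean_space set"
  assumes Z: "convex Z" and z0: "z0 extreme_point_of Z"
    and \<epsilon>: "0 < \<epsilon>" and closed: "closed (Z \<inter> sphere z0 \<epsilon>)"
  obtains a c where "c < a \<bullet> z0" "\<And>w. w \<in> Z \<Longrightarrow> c \<le> a \<bullet> w \<Longrightarrow> dist z0 w < \<epsilon>"
proof -
  let ?C = "Z \<inter> sphere z0 \<epsilon>"
  have "compact ?C"
    using closed by (meson bounded_Int bounded_sphere compact_eq_bounded_closed)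
  have "convex hull ?C \<subseteq> Z - {z0}"
    using Z z0 \<epsilon> by (intro hull_minimal) (auto simp: extreme_point_of_stillconvex)
  then have "z0 \<notin> convex hull ?C" by blast
  then obtain a0 b where sep: "a0 \<bullet> z0 < b" "\<forall>x\<in>convex hull ?C. b < a0 \<bullet> x"
    using separating_hyperplane_closed_point[OF convex_convex_hull
        compact_imp_closed[OF compact_convex_hull[OF \<open>compact ?C\<close>]]] by blast
  show thesis
  proof (rule that[of "- b" "- a0"])
    show "- b < - a0 \<bullet> z0" using sep(1) by simp
    fix w assume w: "w \<in> Z" "- b \<le> - a0 \<bullet> w"
    show "dist z0 w < \<epsilon>"
    proof (rule ccontr)
      let ?H = "Z \<inter> {x. - b \<le> - a0 \<bullet> x}"
      assume "\<not> dist z0 w < \<epsilon>"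
      moreover have "convex ?H"
        using Z convex_halfspace_ge[of "- b" "- a0"] by (rule convex_Int)
      moreover have "z0 \<in> ?H" using z0 sep(1) by (simp add: extreme_point_of_def)
      moreover have "w \<in> ?H" using w by simp
      ultimately obtain p where p: "p \<in> ?H" "dist z0 p = \<epsilon>"
        using convex_contains_point_at_distance[of ?H z0 w \<epsilon>] \<epsilon> by auto
      then have "p \<in> convex hull ?C" by (simp add: hull_inc)
      then show False using sep(2) p(1) by fastforce
    qed
  qed
qed

lemma compact_positive_dominates_small_multiple:
  fixes f g :: "'a::topological_space \<Rightarrow> real"
  assumes Q: "compact Q" "continuous_on Q f" "continuous_on Q g" "\<And>q. q \<in> Q \<Longrightarrow> 0 < f q"
  obtains \<delta> where "0 < \<delta>" "\<And>q. q \<in> Q \<Longrightarrow> \<delta> * g q < f q"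
proof (cases "Q = {}")
  case True
  then show thesis using that[of 1] by simp
next
  case False
  obtain qf where qf: "qf \<in> Q" "\<And>q. q \<in> Q \<Longrightarrow> f qf \<le> f q"
    using continuous_attains_inf[OF Q(1) False Q(2)] by blast
  obtain qg where qg: "\<And>q. q \<in> Q \<Longrightarrow> g q \<le> g qg"
    using continuous_attains_sup[OF Q(1) False Q(3)] by blast
  define \<delta> where "\<delta> = f qf / (2 * (\<bar>g qg\<bar> + 1))"
  have "0 < f qf" using Q(4) qf(1) .
  show thesis
  proof (rule that)
    show "0 < \<delta>" unfolding \<delta>_def using \<open>0 < f qf\<close> by (simp add: add_nonneg_pos)
    fix q assume "q \<in> Q"
    have "\<delta> * g q \<le> \<delta> * \<bar>g qg\<bar>"
      using qg[OF \<open>q \<in> Q\<close>] \<open>0 < \<delta>\<close> by (intro mult_left_mono) auto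
    also have "\<dots> < f qf"
      using \<open>0 < f qf\<close> by (simp add: \<delta>_def field_simps add_nonneg_pos)
    also have "\<dots> \<le> f q" using qf(2)[OF \<open>q \<in> Q\<close>] .
    finally show "\<delta> * g q < f q" .
  qed
qed

lemma tilted_section_in_ball:
  fixes u :: "'a::euclidean_space \<Rightarrow> real"
  assumes u: "convex_on B u" "\<And>z. z \<in> B \<Longrightarrow> 0 \<le> u z"
    and z0: "z0 \<in> B" "u z0 = 0" "0 \<le> b \<bullet> z0 + k"
    and \<epsilon>: "0 < \<epsilon>" "cball z0 \<epsilon> \<subseteq> B"
    and dominated: "\<And>w. w \<in> cball z0 \<epsilon> \<Longrightarrow> 0 \<le> b \<bullet> w + k \<Longrightarrow>
      dist z0 w = \<epsilon> \<or> 2 * h \<le> b \<bullet> w + k \<Longrightarrow> b \<bullet> w + k < u w"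
  shows "affine_sublevel u B b k \<subseteq> ball z0 \<epsilon>"
    and "\<And>w. w \<in> affine_sublevel u B b k \<Longrightarrow> u w \<le> 2 * h"
proof -
  let ?S = "affine_sublevel u B b k"
  have S_iff: "w \<in> ?S \<longleftrightarrow> w \<in> B \<and> u w \<le> b \<bullet> w + k" for w
    by (simp add: affine_sublevel_def)
  have above: "0 \<le> b \<bullet> w + k" if "w \<in> ?S" for w
    using that u(2) S_iff by force
  show S_ball: "?S \<subseteq> ball z0 \<epsilon>"
  proof
    fix w assume w: "w \<in> ?S"
    show "w \<in> ball z0 \<epsilon>"
    proof (rule ccontr)
      assume "w \<notin> ball z0 \<epsilon>"
      then have far: "\<epsilon> \<le> dist z0 w" by simp
      have "z0 \<in> ?S" using z0 S_iff by simp
      then obtain p where p: "p \<in> ?S" "dist z0 p = \<epsilon>"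
        by (rule convex_contains_point_at_distance[OF convex_affine_sublevel[OF u(1)] _ w])
          (use \<epsilon>(1) far in auto)
      then have "b \<bullet> p + k < u p"
        using dominated[OF _ above[OF p(1)]] by simp
      then show False using p(1) S_iff by simp
    qed
  qed
  fix w assume w: "w \<in> ?S"
  have "b \<bullet> w + k < 2 * h"
  proof (rule ccontr)
    assume "\<not> b \<bullet> w + k < 2 * h"
    moreover have "w \<in> cball z0 \<epsilon>" using S_ball w by auto
    ultimately have "b \<bullet> w + k < u w"
      using dominated[OF _ above[OF w]] by simp
    then show False using w S_iff by simp
  qed
  then show "u w \<le> 2 * h" using w S_iff by simp
qed

lemma highest_point_of_zero_cap:
  fixes u :: "'a::euclidean_space \<Rightarrow> real"
  assumes "continuous_on B u" "cball z0 \<epsilon> \<subseteq> B" "0 \<le> \<epsilon>" "u z0 = 0" "c \<le> a \<bullet> z0"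
  obtains zs where "zs \<in> cball z0 \<epsilon>" "u zs = 0" "c \<le> a \<bullet> zs"
    "\<And>w. w \<in> cball z0 \<epsilon> \<Longrightarrow> u w = 0 \<Longrightarrow> c \<le> a \<bullet> w \<Longrightarrow> a \<bullet> w \<le> a \<bullet> zs"
proof -
  let ?Y = "{w \<in> cball z0 \<epsilon>. u w = 0 \<and> c \<le> a \<bullet> w}"
  have "closed (cball z0 \<epsilon> \<inter> u -` {0})"
    using continuous_closed_preimage[OF continuous_on_subset[OF assms(1,2)] closed_cball closed_singleton] .
  moreover have "closed {w. c \<le> a \<bullet> w}"
    by (intro closed_Collect_le continuous_intros)
  moreover have "?Y = cball z0 \<epsilon> \<inter> u -` {0} \<inter> {w. c \<le> a \<bullet> w}"
    by auto
  ultimately have "compact ?Y"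
    by (metis closed_Int bounded_Int bounded_cball compact_eq_bounded_closed)
  moreover have "z0 \<in> ?Y" using assms(3-5) by simp
  moreover have "continuous_on ?Y (\<lambda>w. a \<bullet> w)" by (intro continuous_intros)
  ultimately obtain zs where "zs \<in> ?Y" "\<forall>w\<in>?Y. a \<bullet> w \<le> a \<bullet> zs"
    using continuous_attains_sup by blast
  then show thesis using that by blast
qed

text \<open>With \<open>zs\<close> the highest point of the cap \<open>{u = 0, a \<bullet> w \<ge> c}\<close>, the points of the cap region
  lying on the rim of the ball or at least twice as high avoid the zero set, so by compactness a
  small multiple of \<open>a \<bullet> w - c\<close> stays below \<open>u\<close> there.\<close>
lemma small_tilt_below_zero_cap:
  fixes u :: "'a::euclidean_space \<Rightarrow> real"
  assumes cont: "continuous_on B u" and nonneg: "\<And>z. z \<in> B \<Longrightarrow> 0 \<le> u z"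
    and \<epsilon>: "0 < \<epsilon>" "cball z0 \<epsilon> \<subseteq> B"
    and z0: "u z0 = 0" "c < a \<bullet> z0"
    and cap: "\<And>w. w \<in> B \<Longrightarrow> u w = 0 \<Longrightarrow> c \<le> a \<bullet> w \<Longrightarrow> dist z0 w < \<epsilon>"
  obtains \<delta> zs where "0 < \<delta>" "zs \<in> B" "u zs = 0" "c < a \<bullet> zs"
    "\<And>w. w \<in> cball z0 \<epsilon> \<Longrightarrow> c \<le> a \<bullet> w \<Longrightarrow> dist z0 w = \<epsilon> \<or> 2 * (a \<bullet> zs - c) \<le> a \<bullet> w - c \<Longrightarrow>
      \<delta> * (a \<bullet> w - c) < u w"
proof -
  define l where "l w = a \<bullet> w - c" for w
  have l_cont: "continuous_on A l" for A unfolding l_def by (intro continuous_intros)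
  obtain zs where zs: "zs \<in> cball z0 \<epsilon>" "u zs = 0" "c \<le> a \<bullet> zs"
    and zs_highest: "\<And>w. w \<in> cball z0 \<epsilon> \<Longrightarrow> u w = 0 \<Longrightarrow> c \<le> a \<bullet> w \<Longrightarrow> a \<bullet> w \<le> a \<bullet> zs"
    using highest_point_of_zero_cap[OF cont \<epsilon>(2) less_imp_le[OF \<epsilon>(1)] z0(1) less_imp_le[OF z0(2)]]
    by blast
  have highest: "l w \<le> l zs" if "w \<in> cball z0 \<epsilon>" "u w = 0" "0 \<le> l w" for w
    using zs_highest[OF that(1,2)] that(3) by (simp add: l_def)
  have "0 < l zs" using highest[of z0] \<epsilon>(1) z0 by (simp add: l_def)
  define Q where "Q = {w \<in> cball z0 \<epsilon>. 0 \<le> l w \<and> (dist z0 w = \<epsilon> \<or> 2 * l zs \<le> l w)}"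
  have "compact Q"
  proof -
    have "closed {w. 0 \<le> l w}" "closed {w. 2 * l zs \<le> l w}"
      by (intro closed_Collect_le l_cont continuous_on_const)+
    moreover have "Q = cball z0 \<epsilon> \<inter> {w. 0 \<le> l w} \<inter> (sphere z0 \<epsilon> \<union> {w. 2 * l zs \<le> l w})"
      by (auto simp: Q_def)
    ultimately show ?thesis
      by (simp add: compact_Int_closed closed_Un)
  qed
  have Q_pos: "0 < u q" if q: "q \<in> Q" for q
  proof (rule ccontr)
    have qB: "q \<in> B" using q \<epsilon>(2) by (auto simp: Q_def)
    assume "\<not> 0 < u q"
    then have "u q = 0" using nonneg[OF qB] by simp
    have "0 \<le> l q" using q by (simp add: Q_def)
    then have "dist z0 q < \<epsilon>" using cap[of q] qB \<open>u q = 0\<close> by (simp add: l_def)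
    moreover have "l q \<le> l zs"
      using highest[of q] q \<open>u q = 0\<close> \<open>0 \<le> l q\<close> by (simp add: Q_def)
    ultimately show False using q \<open>0 < l zs\<close> by (simp add: Q_def)
  qed
  have "continuous_on Q u"
    by (rule continuous_on_subset[OF cont]) (use \<epsilon>(2) in \<open>auto simp: Q_def\<close>)
  obtain \<delta> where \<delta>: "0 < \<delta>" "\<And>q. q \<in> Q \<Longrightarrow> \<delta> * l q < u q"
    using compact_positive_dominates_small_multiple[OF \<open>compact Q\<close> \<open>continuous_on Q u\<close> l_cont Q_pos]
    by blast
  show thesis
  proof (rule that[of \<delta> zs, OF \<delta>(1)])
    show "zs \<in> B" "u zs = 0" using zs(1,2) \<epsilon>(2) by blast+
    show "c < a \<bullet> zs" using \<open>0 < l zs\<close> by (simp add: l_def)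
    fix w assume "w \<in> cball z0 \<epsilon>" "c \<le> a \<bullet> w" "dist z0 w = \<epsilon> \<or> 2 * (a \<bullet> zs - c) \<le> a \<bullet> w - c"
    then have "w \<in> Q" by (simp add: Q_def l_def)
    then show "\<delta> * (a \<bullet> w - c) < u w" using \<delta>(2) by (simp add: l_def)
  qed
qed

lemma small_section_touching_zero_set:
  fixes u :: "'a::euclidean_space \<Rightarrow> real"
  assumes u: "convex_on B u" "open B" "\<And>z. z \<in> B \<Longrightarrow> 0 \<le> u z"
    and z0: "z0 extreme_point_of {z \<in> B. u z = 0}"
    and \<epsilon>: "0 < \<epsilon>" "cball z0 \<epsilon> \<subseteq> B"
  obtains b k zs where "affine_sublevel u B b k \<subseteq> ball z0 \<epsilon>" "zs \<in> B" "u zs = 0"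
    "0 < b \<bullet> zs + k" "\<And>w. w \<in> affine_sublevel u B b k \<Longrightarrow> u w \<le> 2 * (b \<bullet> zs + k)"
proof -
  let ?Z = "{z \<in> B. u z = 0}"
  have cont: "continuous_on B u" using convex_on_continuous u(1,2) by blast
  have z0Z: "z0 \<in> B" "u z0 = 0" using z0 by (auto simp: extreme_point_of_def)
  have sphere_B: "sphere z0 \<epsilon> \<subseteq> B" using \<epsilon>(2) sphere_cball by blast
  then have "?Z \<inter> sphere z0 \<epsilon> = sphere z0 \<epsilon> \<inter> u -` {0}" by auto
  then have "closed (?Z \<inter> sphere z0 \<epsilon>)"
    using continuous_closed_preimage[OF continuous_on_subset[OF cont sphere_B] closed_sphere closed_singleton]
    by simp
  then obtain a c where above: "c < a \<bullet> z0" and cap: "\<And>w. w \<in> ?Z \<Longrightarrow> c \<le> a \<bullet> w \<Longrightarrow> dist z0 w < \<epsilon>"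
    using extreme_point_cut_off[OF convex_zero_set[OF u(1,3)] z0 \<epsilon>(1)] by blast
  obtain \<delta> zs where \<delta>: "0 < \<delta>" and zs: "zs \<in> B" "u zs = 0" "c < a \<bullet> zs"
    and dominated: "\<And>w. w \<in> cball z0 \<epsilon> \<Longrightarrow> c \<le> a \<bullet> w \<Longrightarrow>
      dist z0 w = \<epsilon> \<or> 2 * (a \<bullet> zs - c) \<le> a \<bullet> w - c \<Longrightarrow> \<delta> * (a \<bullet> w - c) < u w"
    using small_tilt_below_zero_cap[OF cont u(3) \<epsilon> z0Z(2) above] cap by blast
  have tilt: "(\<delta> *\<^sub>R a) \<bullet> w + - \<delta> * c = \<delta> * (a \<bullet> w - c)" for w
    by (simp add: algebra_simps)
  have "\<delta> * (a \<bullet> w - c) < u w" if "w \<in> cball z0 \<epsilon>" "0 \<le> \<delta> * (a \<bullet> w - c)"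
    "dist z0 w = \<epsilon> \<or> 2 * (\<delta> * (a \<bullet> zs - c)) \<le> \<delta> * (a \<bullet> w - c)" for w
  proof (rule dominated[OF that(1)])
    show "c \<le> a \<bullet> w" "dist z0 w = \<epsilon> \<or> 2 * (a \<bullet> zs - c) \<le> a \<bullet> w - c"
      using that(2,3) \<delta> by (auto simp: zero_le_mult_iff)
  qed
  then have tilted_ball: "affine_sublevel u B (\<delta> *\<^sub>R a) (- \<delta> * c) \<subseteq> ball z0 \<epsilon>"
    and tilted_le: "\<And>w. w \<in> affine_sublevel u B (\<delta> *\<^sub>R a) (- \<delta> * c) \<Longrightarrow>
      u w \<le> 2 * (\<delta> * (a \<bullet> zs - c))"
    using tilted_section_in_ball[OF u(1,3) z0Z _ \<epsilon>, of "\<delta> *\<^sub>R a" "- \<delta> * c" "\<delta> * (a \<bullet> zs - c)"]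
      above \<delta> unfolding tilt by auto
  show thesis
  proof (rule that[of "\<delta> *\<^sub>R a" "- \<delta> * c" zs, OF tilted_ball zs(1,2)])
    show "0 < (\<delta> *\<^sub>R a) \<bullet> zs + - \<delta> * c" unfolding tilt using \<delta> zs(3) by simp
    show "u w \<le> 2 * ((\<delta> *\<^sub>R a) \<bullet> zs + - \<delta> * c)"
      if "w \<in> affine_sublevel u B (\<delta> *\<^sub>R a) (- \<delta> * c)" for w
      unfolding tilt using tilted_le[OF that] .
  qed
qed

lemma abs_inner_less_cart:
  fixes q x :: "real ^ 'n" and d e :: "'n \<Rightarrow> real" and c :: real
  assumes "\<And>i. \<bar>q $ i\<bar> < e i" "\<And>i. \<bar>x $ i\<bar> \<le> d i" "\<And>i. 0 < d i" "\<And>i. e i * d i = c"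
  shows "\<bar>q \<bullet> x\<bar> < CARD('n) * c"
proof -
  have "\<bar>q \<bullet> x\<bar> \<le> (\<Sum>i\<in>UNIV. \<bar>q $ i\<bar> * \<bar>x $ i\<bar>)"
    unfolding inner_vec_def by (simp flip: abs_mult)
  also have "\<dots> < (\<Sum>i\<in>(UNIV::'n set). c)"
  proof (rule sum_strict_mono)
    fix i
    have "\<bar>q $ i\<bar> * \<bar>x $ i\<bar> \<le> \<bar>q $ i\<bar> * d i" by (intro mult_left_mono assms(2)) auto
    also have "\<dots> < e i * d i" by (intro mult_strict_right_mono assms(1,3))
    finally show "\<bar>q $ i\<bar> * \<bar>x $ i\<bar> < c" using assms(4) by simp
  qed auto
  finally show ?thesis by simp
qed

text \<open>Each slope \<open>p\<close> near \<open>b\<close> is a subgradient at the minimum point of \<open>u w - p \<bullet> w\<close> over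
  the section: the tilt is too small for this minimum to lie on the boundary, and an
  interior local minimum of a convex function is global.\<close>
lemma box_subset_subgradient_image:
  fixes u :: "real ^ 'n \<Rightarrow> real" and d :: "'n \<Rightarrow> real"
  assumes u: "convex_on B u" "open B"
    and S: "compact (affine_sublevel u B b k)"
    and zs: "zs \<in> B" "u zs + h = b \<bullet> zs + k" "0 < h"
    and d: "\<And>i. 0 < d i" "\<And>w i. w \<in> affine_sublevel u B b k \<Longrightarrow> \<bar>w $ i - zs $ i\<bar> \<le> d i"
  defines "e \<equiv> \<chi> i. h / (CARD('n) * d i)"
  shows "box (b - e) (b + e) \<subseteq> (\<Union>z\<in>affine_sublevel u B b k. subgradient u B z)"
proof
  let ?S = "affine_sublevel u B b k"
  fix p assume "p \<in> box (b - e) (b + e)"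
  then have q: "\<bar>(p - b) $ i\<bar> < h / (CARD('n) * d i)" for i
    by (auto simp: mem_box_cart e_def abs_less_iff algebra_simps)
  have ed: "h / (CARD('n) * d i) * d i = h / CARD('n)" for i
    using d(1)[of i] by simp
  have tilt_small: "\<bar>(p - b) \<bullet> (w - zs)\<bar> < h" if "w \<in> ?S" for w
    using abs_inner_less_cart[of "p - b" _ "w - zs" d, OF q _ d(1) ed] d(2)[OF that] by simp
  let ?\<phi> = "\<lambda>w. u w - p \<bullet> w"
  have "zs \<in> ?S" using zs by (simp add: affine_sublevel_def)
  moreover have "continuous_on ?S ?\<phi>"
    using continuous_on_subset[OF convex_on_continuous[OF u(2,1)], of ?S]
    by (intro continuous_intros) (auto simp: affine_sublevel_def)
  ultimately obtain w1 where w1: "w1 \<in> ?S" "\<And>w. w \<in> ?S \<Longrightarrow> ?\<phi> w1 \<le> ?\<phi> w"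
    using continuous_attains_inf[OF S] by blast
  have "u w1 < b \<bullet> w1 + k"
  proof (rule ccontr)
    assume "\<not> u w1 < b \<bullet> w1 + k"
    then have "u w1 = b \<bullet> w1 + k" using w1(1) by (simp add: affine_sublevel_def)
    then have "h \<le> (p - b) \<bullet> (w1 - zs)"
      using w1(2)[OF \<open>zs \<in> ?S\<close>] zs(2) by (simp add: algebra_simps inner_diff_left inner_diff_right)
    then show False using tilt_small[OF w1(1)] by simp
  qed
  then have "w1 \<in> B \<inter> (\<lambda>w. u w - b \<bullet> w) -` {..<k}"
    using w1(1) by (simp add: affine_sublevel_def)
  moreover have "continuous_on B (\<lambda>w. u w - b \<bullet> w)"
    using convex_on_continuous[OF u(2,1)] by (intro continuous_intros)
  then have "open (B \<inter> (\<lambda>w. u w - b \<bullet> w) -` {..<k})"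
    using u(2) by (rule continuous_open_preimage) simp
  ultimately obtain r where r: "0 < r" "ball w1 r \<subseteq> B \<inter> (\<lambda>w. u w - b \<bullet> w) -` {..<k}"
    by (meson openE)
  then have "ball w1 r \<subseteq> ?S" by (auto simp: affine_sublevel_def)
  then have global_min: "\<forall>w\<in>B. ?\<phi> w1 \<le> ?\<phi> w"
    using convex_local_global_minimum[OF r(1) convex_on_minus_inner[OF u(1)]] w1(2) r(2) by blast
  have "p \<in> subgradient u B w1"
    unfolding subgradient_def
  proof (intro CollectI ballI)
    fix w assume "w \<in> B"
    then show "u w1 + p \<bullet> (w - w1) \<le> u w"
      using global_min by (force simp: inner_diff_right)
  qed
  then show "p \<in> (\<Union>z\<in>?S. subgradient u B z)"
    using w1(1) by blast
qed

lemma emeasure_lebesgue_cbox_cart: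
  fixes a b :: "real ^ 'n"
  assumes "\<And>i. a $ i \<le> b $ i"
  shows "emeasure lebesgue (cbox a b) = ennreal (\<Prod>i\<in>UNIV. b $ i - a $ i)"
proof -
  have "cbox a b \<noteq> {}" using assms by (auto simp: cbox_def Basis_vec_def cart_eq_inner_axis)
  then show ?thesis
    by (simp add: emeasure_eq_measure2 emeasure_lborel_cbox_finite content_cbox_cart)
qed

lemma emeasure_lebesgue_box_cart:
  fixes a b :: "real ^ 'n"
  assumes "\<And>i. a $ i \<le> b $ i"
  shows "emeasure lebesgue (box a b) = ennreal (\<Prod>i\<in>UNIV. b $ i - a $ i)"
  using emeasure_lebesgue_cbox_cart[OF assms]
  by (simp add: emeasure_lborel_box_eq emeasure_lborel_cbox_eq)

lemma MA_le_emeasure_le: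
  assumes MA: "MA_le u B \<Lambda>" and S: "S \<in> sets borel" "S \<subseteq> B" "S \<subseteq> C"
    and A: "A \<subseteq> (\<Union>z\<in>S. subgradient u B z)" and C: "C \<in> sets lebesgue"
  shows "emeasure lebesgue A \<le> ennreal \<Lambda> * emeasure lebesgue C"
proof -
  obtain T where T: "T \<in> sets lebesgue" "(\<Union>z\<in>S. subgradient u B z) \<subseteq> T"
      "emeasure lebesgue T \<le> ennreal \<Lambda> * emeasure lebesgue S"
    using MA S(1,2) unfolding MA_le_def by (elim allE impE bexE conjE) auto
  have "emeasure lebesgue A \<le> emeasure lebesgue T"
    using A T(1,2) by (intro emeasure_mono) auto
  also have "\<dots> \<le> ennreal \<Lambda> * emeasure lebesgue S" by (rule T(3))
  also have "\<dots> \<le> ennreal \<Lambda> * emeasure lebesgue C"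
    using S(3) C by (intro mult_left_mono emeasure_mono) auto
  finally show ?thesis .
qed

lemma MA_le_section_box_volume:
  fixes u :: "real ^ 'n \<Rightarrow> real" and d :: "'n \<Rightarrow> real"
  assumes MA: "MA_le u B \<Lambda>" and u: "convex_on B u" "open B"
    and S: "compact (affine_sublevel u B b k)"
    and zs: "zs \<in> B" "u zs + h = b \<bullet> zs + k" "0 < h"
    and d: "\<And>i. 0 < d i" "\<And>w i. w \<in> affine_sublevel u B b k \<Longrightarrow> \<bar>w $ i - zs $ i\<bar> \<le> d i"
  shows "(\<Prod>i\<in>UNIV. h / (CARD('n) * d i)) \<le> \<Lambda> * (\<Prod>i\<in>UNIV. d i)"
proof -
  let ?S = "affine_sublevel u B b k"
  define e where "e = (\<chi> i. h / (CARD('n) * d i))"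
  define P where "P = (\<Prod>i\<in>UNIV. 2 * e $ i)"
  define D where "D = (\<Prod>i\<in>UNIV. 2 * d i)"
  have e_pos: "0 < e $ i" for i using zs(3) d(1)[of i] by (simp add: e_def)
  have S_box: "?S \<subseteq> cbox (zs - (\<chi> i. d i)) (zs + (\<chi> i. d i))"
  proof
    fix w assume "w \<in> ?S"
    then have "\<bar>w $ i - zs $ i\<bar> \<le> d i" for i by (rule d(2))
    then show "w \<in> cbox (zs - (\<chi> i. d i)) (zs + (\<chi> i. d i))"
      by (simp add: mem_box_cart abs_le_iff algebra_simps)
  qed
  have "?S \<in> sets borel" using S by (simp add: borel_closed compact_imp_closed)
  moreover have "?S \<subseteq> B" unfolding affine_sublevel_def by blast
  moreover have "box (b - e) (b + e) \<subseteq> (\<Union>z\<in>?S. subgradient u B z)"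
    using box_subset_subgradient_image[OF u S zs d] unfolding e_def .
  ultimately have MA_box: "emeasure lebesgue (box (b - e) (b + e))
      \<le> ennreal \<Lambda> * emeasure lebesgue (cbox (zs - (\<chi> i. d i)) (zs + (\<chi> i. d i)))"
    by (rule MA_le_emeasure_le[OF MA _ _ S_box _ fmeasurableD[OF lmeasurable_cbox]])
  have "ennreal P = emeasure lebesgue (box (b - e) (b + e))"
  proof -
    have "(b - e) $ i \<le> (b + e) $ i" "(b + e) $ i - (b - e) $ i = 2 * e $ i" for i
      using e_pos[of i] by simp_all
    then show ?thesis
      using emeasure_lebesgue_box_cart[of "b - e" "b + e"] by (simp add: P_def)
  qed
  also note MA_box
  also have "emeasure lebesgue (cbox (zs - (\<chi> i. d i)) (zs + (\<chi> i. d i))) = ennreal D"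
  proof -
    have "(zs - (\<chi> i. d i)) $ i \<le> (zs + (\<chi> i. d i)) $ i"
      "(zs + (\<chi> i. d i)) $ i - (zs - (\<chi> i. d i)) $ i = 2 * d i" for i
      using d(1)[of i] by simp_all
    then show ?thesis
      using emeasure_lebesgue_cbox_cart[of "zs - (\<chi> i. d i)" "zs + (\<chi> i. d i)"] by (simp add: D_def)
  qed
  finally have PD: "ennreal P \<le> ennreal \<Lambda> * ennreal D" .
  have "0 < P" using e_pos by (simp add: P_def prod_pos)
  have "0 \<le> \<Lambda>"
  proof (rule ccontr)
    assume "\<not> 0 \<le> \<Lambda>"
    then have "ennreal \<Lambda> = 0" by (simp add: ennreal_neg)
    then show False using PD \<open>0 < P\<close> by simp
  qed
  then have "P \<le> \<Lambda> * D"
    using PD d(1) by (simp add: D_def prod_nonneg less_imp_le ennreal_mult[symmetric])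
  moreover have "P = 2 ^ CARD('n) * (\<Prod>i\<in>UNIV. h / (CARD('n) * d i))"
    unfolding P_def e_def vec_lambda_beta prod.distrib by simp
  moreover have "D = 2 ^ CARD('n) * (\<Prod>i\<in>UNIV. d i)"
    by (simp add: D_def prod.distrib)
  ultimately show ?thesis by (simp add: mult.left_commute[of \<Lambda>])
qed

lemma prod_thin_box_le:
  fixes \<eta> \<epsilon> h :: real
  assumes "finite I" "K \<subseteq> I" "card I \<le> 2 * card K" "0 < \<eta>" "\<eta> \<le> \<epsilon>" "\<eta> \<le> h"
  shows "(\<Prod>i\<in>I. if i \<in> K then \<eta> else \<epsilon>) ^ 2 \<le> (\<epsilon> * h) ^ card I"
proof -
  let ?n = "card I" and ?k = "card K"
  have k: "?k \<le> ?n" using assms(1,2) by (rule card_mono)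
  have "(\<Prod>i\<in>I. if i \<in> K then \<eta> else \<epsilon>) = \<eta> ^ ?k * \<epsilon> ^ (?n - ?k)"
    using assms(1,2) by (simp add: prod.If_cases Int_absorb1 Diff_eq[symmetric] card_Diff_subset
        finite_subset)
  then have "(\<Prod>i\<in>I. if i \<in> K then \<eta> else \<epsilon>) ^ 2 = \<eta> ^ (?k * 2) * \<epsilon> ^ ((?n - ?k) * 2)"
    by (simp add: power_mult_distrib flip: power_mult)
  also have "\<eta> ^ (?k * 2) = \<eta> ^ ?n * \<eta> ^ (2 * ?k - ?n)"
    using assms(3) by (simp add: mult.commute[of ?k] flip: power_add)
  also have "\<eta> ^ ?n * \<eta> ^ (2 * ?k - ?n) * \<epsilon> ^ ((?n - ?k) * 2)
      \<le> h ^ ?n * \<epsilon> ^ (2 * ?k - ?n) * \<epsilon> ^ ((?n - ?k) * 2)"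
    using assms(4-6) by (intro mult_right_mono mult_mono power_mono) auto
  also have "\<dots> = h ^ ?n * \<epsilon> ^ (2 * ?k - ?n + (?n - ?k) * 2)"
    by (simp add: mult.assoc power_add)
  also have "2 * ?k - ?n + (?n - ?k) * 2 = ?n"
    using k assms(3) by linarith
  finally show ?thesis by (simp add: power_mult_distrib mult.commute)
qed

lemma MA_le_thin_section:
  fixes u :: "real ^ 'n \<Rightarrow> real" and K :: "'n set" and \<Lambda> \<epsilon> h :: real
  assumes K: "CARD('n) \<le> 2 * card K"
    and MA: "MA_le u B \<Lambda>" and u: "convex_on B u" "open B"
    and S: "compact (affine_sublevel u B b k)"
    and zs: "zs \<in> B" "u zs + h = b \<bullet> zs + k" "0 < h" and \<epsilon>: "0 < \<epsilon>"
    and thin: "\<And>w i. w \<in> affine_sublevel u B b k \<Longrightarrow>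
      \<bar>w $ i - zs $ i\<bar> \<le> 2 * (if i \<in> K then min \<epsilon> h else \<epsilon>)"
  shows "1 \<le> \<Lambda> * (4 * real CARD('n) * \<epsilon>) ^ CARD('n)"
proof -
  let ?n = "CARD('n)"
  define x where "x i = (if i \<in> K then min \<epsilon> h else \<epsilon>)" for i
  have x_pos: "0 < x i" for i using zs(3) \<epsilon> by (simp add: x_def)
  have vol: "(\<Prod>i\<in>UNIV. h / (?n * (2 * x i))) \<le> \<Lambda> * (\<Prod>i\<in>UNIV. 2 * x i)"
    using MA_le_section_box_volume[OF MA u S zs, of "\<lambda>i. 2 * x i"] x_pos thin by (simp add: x_def)
  have "(h / ?n) ^ ?n = (\<Prod>i\<in>UNIV. h / (?n * (2 * x i))) * (\<Prod>i\<in>UNIV. 2 * x i)"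
    using x_pos by (simp add: prod.distrib[symmetric] less_imp_neq[symmetric])
  also have "\<dots> \<le> \<Lambda> * (\<Prod>i\<in>UNIV. 2 * x i) * (\<Prod>i\<in>UNIV. 2 * x i)"
    using x_pos by (intro mult_right_mono[OF vol] prod_nonneg) (simp add: less_imp_le)
  also have "\<dots> = \<Lambda> * (\<Prod>i\<in>UNIV. 2 * x i) ^ 2"
    by (simp add: power2_eq_square)
  finally have sq: "(h / ?n) ^ ?n \<le> \<Lambda> * (\<Prod>i\<in>UNIV. 2 * x i) ^ 2" .
  have "0 < (h / ?n) ^ ?n" using zs(3) by simp
  then have "0 < \<Lambda>" using sq by (smt (verit) mult_nonpos_nonneg zero_le_power2)
  have "((2::real) ^ ?n) ^ 2 = 4 ^ ?n"
    by (simp add: power2_eq_square flip: power_mult_distrib)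
  then have "(\<Prod>i\<in>UNIV. 2 * x i) ^ 2 = 4 ^ ?n * (\<Prod>i\<in>UNIV. x i) ^ 2"
    by (simp add: prod.distrib power_mult_distrib)
  also have "\<dots> \<le> 4 ^ ?n * (\<epsilon> * h) ^ ?n"
    using prod_thin_box_le[of UNIV K "min \<epsilon> h" \<epsilon> h] K \<epsilon> zs(3) unfolding x_def by simp
  also have "\<dots> = (4 * real ?n * \<epsilon>) ^ ?n * (h / ?n) ^ ?n"
  proof -
    have "4 * (\<epsilon> * h) = (4 * real ?n * \<epsilon>) * (h / ?n)" by simp
    then show ?thesis by (metis power_mult_distrib)
  qed
  finally have "1 * (h / ?n) ^ ?n \<le> (\<Lambda> * (4 * real ?n * \<epsilon>) ^ ?n) * (h / ?n) ^ ?n"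
    using sq \<open>0 < \<Lambda>\<close> by (simp add: mult.assoc order_trans)
  then show ?thesis
    using \<open>0 < (h / ?n) ^ ?n\<close> by (simp only: mult_le_cancel_right)
qed

lemma MA_bound_at_extreme_point_of_zero_set:
  fixes u :: "real ^ 'n \<Rightarrow> real" and K :: "'n set" and \<Lambda> \<epsilon> :: real
  assumes K: "CARD('n) \<le> 2 * card K"
    and u: "convex_on (ball 0 1) u" "MA_le u (ball 0 1) \<Lambda>"
      "\<And>z. z \<in> ball 0 1 \<Longrightarrow> norm (ypart K z) \<le> u z"
    and z0: "z0 extreme_point_of {z \<in> ball 0 1. u z = 0}"
    and \<epsilon>: "0 < \<epsilon>" "cball z0 \<epsilon> \<subseteq> ball 0 1"
  shows "1 \<le> \<Lambda> * (4 * real CARD('n) * \<epsilon>) ^ CARD('n)"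
proof -
  let ?B = "ball (0::real ^ 'n) 1"
  have y_le_u: "\<bar>w $ i\<bar> \<le> u w" if "w \<in> ?B" "i \<in> K" for w i
    using component_le_norm_cart[of "ypart K w" i] u(3)[OF that(1)] that(2)
    by (simp add: ypart_def)
  have u_nonneg: "0 \<le> u w" if "w \<in> ?B" for w
    using u(3)[OF that] norm_ge_zero order_trans by blast
  obtain b k zs where S_ball: "affine_sublevel u ?B b k \<subseteq> ball z0 \<epsilon>"
    and zs: "zs \<in> ?B" "u zs = 0" "0 < b \<bullet> zs + k"
    and S_le: "\<And>w. w \<in> affine_sublevel u ?B b k \<Longrightarrow> u w \<le> 2 * (b \<bullet> zs + k)"
    using small_section_touching_zero_set[OF u(1) open_ball u_nonneg z0 \<epsilon>] by blast
  let ?S = "affine_sublevel u ?B b k" and ?h = "b \<bullet> zs + k"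
  have "compact ?S"
    using compact_affine_sublevel[OF convex_on_continuous[OF open_ball u(1)] \<epsilon>(2)]
      S_ball ball_subset_cball by blast
  have "zs \<in> ?S" using zs by (simp add: affine_sublevel_def)
  have S_thin: "\<bar>w $ i - zs $ i\<bar> \<le> 2 * (if i \<in> K then min \<epsilon> ?h else \<epsilon>)" if "w \<in> ?S" for w i
  proof -
    have "\<bar>w $ i - zs $ i\<bar> \<le> dist w zs"
      using component_le_norm_cart[of "w - zs" i] by (simp add: dist_norm)
    also have "\<dots> \<le> dist z0 w + dist z0 zs" by (rule dist_triangle3)
    also have "\<dots> < 2 * \<epsilon>"
      using subsetD[OF S_ball that] subsetD[OF S_ball \<open>zs \<in> ?S\<close>] by simp
    finally have "\<bar>w $ i - zs $ i\<bar> \<le> 2 * \<epsilon>" by simp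
    moreover have "\<bar>w $ i - zs $ i\<bar> \<le> 2 * ?h" if "i \<in> K"
    proof -
      have "zs $ i = 0" using y_le_u[OF zs(1) that] zs(2) by simp
      then show ?thesis
        using y_le_u[of w i] S_le[OF \<open>w \<in> ?S\<close>] that \<open>w \<in> ?S\<close>
        by (force simp: affine_sublevel_def)
    qed
    ultimately show ?thesis by (auto simp: min_def)
  qed
  show ?thesis
    using MA_le_thin_section[OF K u(2,1) open_ball \<open>compact ?S\<close> zs(1) _ zs(3) \<epsilon>(1) S_thin] zs(2)
    by simp
qed

theorem proposition2p4:
  fixes u :: "real ^ 'n \<Rightarrow> real" and K :: "'n set" and \<Lambda> :: real
  assumes "CARD('n) \<ge> 2"
    and "K \<noteq> {}"
    and "2 * card K \<ge> CARD('n)"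
    and "convex_on (ball 0 1) u"
    and "MA_le u (ball 0 1) \<Lambda>"
    and "u 0 = 0"
    and "\<And>z. z \<in> ball 0 1 \<Longrightarrow> u z \<ge> norm (ypart K z)"
  shows "\<not> (\<exists>z. z extreme_point_of {z \<in> ball 0 1. u z = 0} \<and> (\<forall>i\<in>K. z $ i = 0))"
proof
  assume "\<exists>z. z extreme_point_of {z \<in> ball 0 1. u z = 0} \<and> (\<forall>i\<in>K. z $ i = 0)"
  then obtain z0 where z0: "z0 extreme_point_of {z \<in> ball 0 1. u z = 0}" by blast
  then have "norm z0 < 1" by (simp add: extreme_point_of_def)
  define f where "f \<epsilon> = \<Lambda> * (4 * real CARD('n) * \<epsilon>) ^ CARD('n)" for \<epsilon> :: real
  have "(f \<longlongrightarrow> 0) (at_right 0)"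
    unfolding f_def by (auto intro!: tendsto_eq_intros)
  then have "\<forall>\<^sub>F \<epsilon> in at_right 0. f \<epsilon> < 1"
    by (rule order_tendstoD) simp
  moreover have "\<forall>\<^sub>F \<epsilon> in at_right 0. \<epsilon> \<in> {0<..<1 - norm z0}"
    using \<open>norm z0 < 1\<close> by (intro eventually_at_right_real) simp
  ultimately have "\<forall>\<^sub>F \<epsilon> in at_right 0. f \<epsilon> < 1 \<and> \<epsilon> \<in> {0<..<1 - norm z0}"
    by (rule eventually_conj)
  then obtain \<epsilon> where \<epsilon>: "f \<epsilon> < 1" "0 < \<epsilon>" "\<epsilon> < 1 - norm z0"
    using eventually_happens'[OF trivial_limit_at_right_real] by auto
  then have "cball z0 \<epsilon> \<subseteq> ball 0 1" by (simp add: cball_subset_ball_iff dist_norm)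
  then have "1 \<le> f \<epsilon>"
    unfolding f_def
    using MA_bound_at_extreme_point_of_zero_set[OF assms(3,4,5) _ z0 \<epsilon>(2)] assms(7) by blast
  then show False using \<epsilon>(1) by simp
qed

end
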